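(* Let ${\bm X},{\bm Y}$ be finite sets with $n=|{\bm X}|$, $m=|{\bm Y}|$, let $m^{\bm X}_\bullet,m^{\bm Y}_\bullet$ be Markov transition kernels on them, $C\in\mathbb{R}_+^{n\times m}$ a cost matrix, $\delta\in(0,1]$ and $\epsilon\ge0$. Define $C^{\epsilon,\delta,(0)}=C$ and $C^{\epsilon,\delta,(l)}_{ij}=\delta C_{ij}+(1-\delta)d^\epsilon_{\mathrm W}(m^{\bm X}_i,m^{\bm Y}_j;C^{\epsilon,\delta,(l-1)})$ for $l\ge1$. Then $C^{\epsilon,\delta,(k)}$ converges as $k\to\infty$ to the unique fixed point $C^{\epsilon,\delta,(\infty)}$ of the map $D\mapsto\big(\delta C_{ij}+(1-\delta)d^\epsilon_{\mathrm W}(m^{\bm X}_i,m^{\bm Y}_j;D)\big)_{i,j}$, and for all $k$, $$\|C^{\epsilon,\delta,(k)}-C^{\epsilon,\delta,(\infty)}\|_\infty\le\frac{(1-\delta)^k}{\delta}\big(2\|C\|_\infty+\epsilon\log(nm)\big).$$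
   Context: For $\alpha\in\mathcal{P}({\bm X}),\beta\in\mathcal{P}({\bm Y})$, cost $D$ and $\epsilon\ge0$, $d^{\epsilon}_{\mathrm W}(\alpha,\beta;D)=\min_{P\in\mathcal{C}(\alpha,\beta)}\sum_{i,j}P_{ij}D_{ij}+\epsilon\sum_{i,j}P_{ij}\log P_{ij}$, with $\mathcal{C}(\alpha,\beta)$ the set of couplings. $\|\cdot\|_\infty$ is the entrywise max norm. *)

theory Defs
  imports "HOL-Analysis.Analysis"
begin

text \<open>Probability vectors on a finite type, couplings, and the entropic Wasserstein
  distance d^eps_W(alpha,beta;D) = min over couplings of sum P D + eps sum P log P
  (with the convention 0 log 0 = 0, automatic since 0 * ln 0 = 0).\<close>

definition is_prob :: "('a::finite \<Rightarrow> real) \<Rightarrow> bool" where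
  "is_prob \<alpha> \<longleftrightarrow> (\<forall>i. \<alpha> i \<ge> 0) \<and> (\<Sum>i\<in>UNIV. \<alpha> i) = 1"

definition couplings :: "('a::finite \<Rightarrow> real) \<Rightarrow> ('b::finite \<Rightarrow> real) \<Rightarrow> ('a \<Rightarrow> 'b \<Rightarrow> real) set" where
  "couplings \<alpha> \<beta> = {P. (\<forall>i j. P i j \<ge> 0) \<and> (\<forall>i. (\<Sum>j\<in>UNIV. P i j) = \<alpha> i) \<and> (\<forall>j. (\<Sum>i\<in>UNIV. P i j) = \<beta> j)}"

definition ot_objective :: "real \<Rightarrow> ('a::finite \<Rightarrow> 'b::finite \<Rightarrow> real) \<Rightarrow> ('a \<Rightarrow> 'b \<Rightarrow> real) \<Rightarrow> real" where
  "ot_objective \<epsilon> D P = (\<Sum>i\<in>UNIV. \<Sum>j\<in>UNIV. P i j * D i j) + \<epsilon> * (\<Sum>i\<in>UNIV. \<Sum>j\<in>UNIV. P i j * ln (P i j))"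

text \<open>The minimum over the (compact, nonempty) coupling polytope of a continuous
  function; written as an infimum, which is attained.\<close>
definition dW :: "real \<Rightarrow> ('a::finite \<Rightarrow> real) \<Rightarrow> ('b::finite \<Rightarrow> real) \<Rightarrow> ('a \<Rightarrow> 'b \<Rightarrow> real) \<Rightarrow> real" where
  "dW \<epsilon> \<alpha> \<beta> D = Inf (ot_objective \<epsilon> D ` couplings \<alpha> \<beta>)"

definition maxnorm :: "('a::finite \<Rightarrow> 'b::finite \<Rightarrow> real) \<Rightarrow> real" where
  "maxnorm A = Max {\<bar>A i j\<bar> | i j. True}"

definition wl_update :: "real \<Rightarrow> real \<Rightarrow> ('a::finite \<Rightarrow> 'a \<Rightarrow> real) \<Rightarrow> ('b::finite \<Rightarrow> 'b \<Rightarrow> real)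
    \<Rightarrow> ('a \<Rightarrow> 'b \<Rightarrow> real) \<Rightarrow> ('a \<Rightarrow> 'b \<Rightarrow> real) \<Rightarrow> ('a \<Rightarrow> 'b \<Rightarrow> real)" where
  "wl_update \<epsilon> \<delta> mX mY C D = (\<lambda>i j. \<delta> * C i j + (1 - \<delta>) * dW \<epsilon> (mX i) (mY j) D)"

end

theory Submission
  imports Defs
begin

text \<open>For every pair of kernel rows, \<open>dW\<close> is 1-Lipschitz in the cost for the max norm, since
  each objective changes by a \<open>P\<close>-average of the cost changes; hence the update map is a
  contraction with constant \<open>1 - \<delta>\<close>. The stated bound is the a priori estimate of the
  contraction principle, \<open>\<parallel>T\<^sup>k C - C\<^sub>\<infinity>\<parallel> \<le> (1 - \<delta>)\<^sup>k / \<delta> \<cdot> \<parallel>T C - C\<parallel>\<close>, together with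
  \<open>\<parallel>T C - C\<parallel> \<le> \<parallel>C\<parallel> + \<bar>dW(\<dots>; C)\<bar> \<le> 2\<parallel>C\<parallel> + \<epsilon> log (n m)\<close>: the entropy of a coupling is at most
  \<open>log (n m)\<close>, and the product coupling shows \<open>dW(\<dots>; C) \<le> \<parallel>C\<parallel>\<close>.\<close>

lemma tendsto_fun_pointwise:
  fixes f :: "'n \<Rightarrow> 'a \<Rightarrow> 'c::topological_space"
  assumes "\<And>i. ((\<lambda>k. f k i) \<longlongrightarrow> l i) F"
  shows "(f \<longlongrightarrow> l) F"
proof -
  have "limitin (product_topology (\<lambda>i. euclidean) UNIV) f l F"
    unfolding limitin_componentwise using assms by (simp add: limitin_canonical_iff)
  then show ?thesis by (simp add: euclidean_product_topology limitin_canonical_iff)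
qed

lemma geometric_increments_convergent:
  fixes a :: "nat \<Rightarrow> 'a::banach"
  assumes "0 \<le> r" "r < 1" and incr: "\<And>k. norm (a (Suc k) - a k) \<le> c * r ^ k"
  obtains l where "a \<longlonglongrightarrow> l" and "\<And>k. norm (a k - l) \<le> c * r ^ k / (1 - r)"
proof
  define f where "f k = a (Suc k) - a k" for k
  have geom: "summable (\<lambda>k. c * r ^ k)"
    using assms by (intro summable_mult summable_geometric) auto
  have norm_summable: "summable (\<lambda>k. norm (f (k + n)))" for n
    by (intro summable_ignore_initial_segment summable_comparison_test[OF _ geom])
      (use incr in \<open>simp add: f_def\<close>)
  have summable: "summable f"
    using norm_summable[of 0] by (simp add: summable_norm_cancel)
  have partial: "a k = a 0 + (\<Sum>l<k. f l)" for k
    by (simp add: f_def sum_lessThan_telescope)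
  have "(\<lambda>k. a 0 + (\<Sum>l<k. f l)) \<longlonglongrightarrow> a 0 + suminf f"
    by (intro tendsto_add tendsto_const summable_LIMSEQ summable)
  then show "a \<longlonglongrightarrow> a 0 + suminf f"
    by (simp only: partial[symmetric])
  fix k
  have "a k - (a 0 + suminf f) = - (\<Sum>n. f (n + k))"
    using suminf_split_initial_segment[OF summable, of k] partial[of k] by simp
  then have "norm (a k - (a 0 + suminf f)) \<le> (\<Sum>n. norm (f (n + k)))"
    using summable_norm[OF norm_summable[of k]] by simp
  also have "\<dots> \<le> (\<Sum>n. c * r ^ k * r ^ n)"
    using incr[of "_ + k"] assms(1,2)
    by (intro suminf_le norm_summable summable_mult summable_geometric)
      (auto simp: f_def power_add mult_ac)
  also have "\<dots> = c * r ^ k / (1 - r)"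
    using assms by (simp add: suminf_mult suminf_geometric)
  finally show "norm (a k - (a 0 + suminf f)) \<le> c * r ^ k / (1 - r)" .
qed

lemma finite_maxnorm_set:
  fixes A :: "'a::finite \<Rightarrow> 'b::finite \<Rightarrow> real"
  shows "finite {\<bar>A i j\<bar> | i j. True}"
proof -
  have "{\<bar>A i j\<bar> | i j. True} = (\<lambda>(i, j). \<bar>A i j\<bar>) ` UNIV" by auto
  then show ?thesis by simp
qed

lemma abs_le_maxnorm: "\<bar>A i j\<bar> \<le> maxnorm A"
  unfolding maxnorm_def by (intro Max_ge finite_maxnorm_set) auto

lemma maxnorm_le: "(\<And>i j. \<bar>A i j\<bar> \<le> b) \<Longrightarrow> maxnorm A \<le> b"
  using finite_maxnorm_set[of A] unfolding maxnorm_def by (subst Max_le_iff) auto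

lemma maxnorm_nonneg: "0 \<le> maxnorm A"
  using abs_le_maxnorm[of A] by (meson abs_ge_zero order_trans)

lemma maxnorm_minus_commute: "maxnorm (\<lambda>i j. A i j - B i j) = maxnorm (\<lambda>i j. B i j - A i j)"
  unfolding maxnorm_def by (simp add: abs_minus_commute[of "A _ _"])

lemma maxnorm_triangle:
  "maxnorm (\<lambda>i j. A i j - C i j) \<le> maxnorm (\<lambda>i j. A i j - B i j) + maxnorm (\<lambda>i j. B i j - C i j)"
proof (rule maxnorm_le)
  fix i j
  show "\<bar>A i j - C i j\<bar> \<le> maxnorm (\<lambda>i j. A i j - B i j) + maxnorm (\<lambda>i j. B i j - C i j)"
    using abs_le_maxnorm[of "\<lambda>i j. A i j - B i j" i j] abs_le_maxnorm[of "\<lambda>i j. B i j - C i j" i j]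
    by linarith
qed

lemma maxnorm_diff_le_0_imp_eq:
  assumes "maxnorm (\<lambda>i j. A i j - B i j) \<le> 0"
  shows "A = B"
proof (intro ext)
  fix i j
  show "A i j = B i j"
    using abs_le_maxnorm[of "\<lambda>i j. A i j - B i j" i j] assms by simp
qed

lemma maxnorm_contraction_fixpoint_unique:
  fixes T :: "('a::finite \<Rightarrow> 'b::finite \<Rightarrow> real) \<Rightarrow> 'a \<Rightarrow> 'b \<Rightarrow> real"
  assumes "r < 1"
    and contraction: "\<And>D D'. maxnorm (\<lambda>i j. T D i j - T D' i j) \<le> r * maxnorm (\<lambda>i j. D i j - D' i j)"
    and "T D = D" "T L = L"
  shows "D = L"
proof (rule maxnorm_diff_le_0_imp_eq)
  have "maxnorm (\<lambda>i j. D i j - L i j) \<le> r * maxnorm (\<lambda>i j. D i j - L i j)"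
    using contraction[of D L] assms(3,4) by simp
  then have "(1 - r) * maxnorm (\<lambda>i j. D i j - L i j) \<le> 0"
    by (simp add: left_diff_distrib)
  then show "maxnorm (\<lambda>i j. D i j - L i j) \<le> 0"
    using \<open>r < 1\<close> by (simp add: mult_le_0_iff)
qed

lemma maxnorm_geometric_increments_convergent:
  fixes u :: "nat \<Rightarrow> 'a::finite \<Rightarrow> 'b::finite \<Rightarrow> real"
  assumes "0 \<le> r" "r < 1" and incr: "\<And>k. maxnorm (\<lambda>i j. u (Suc k) i j - u k i j) \<le> d * r ^ k"
  obtains L where "u \<longlonglongrightarrow> L" and "\<And>k. maxnorm (\<lambda>i j. u k i j - L i j) \<le> r ^ k / (1 - r) * d"
proof -
  have "\<exists>l. (\<lambda>k. u k i j) \<longlonglongrightarrow> l \<and> (\<forall>k. \<bar>u k i j - l\<bar> \<le> r ^ k / (1 - r) * d)" for i j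
  proof -
    have "\<bar>u (Suc k) i j - u k i j\<bar> \<le> d * r ^ k" for k
      using abs_le_maxnorm[of "\<lambda>i j. u (Suc k) i j - u k i j" i j] incr[of k] by simp
    then obtain l where "(\<lambda>k. u k i j) \<longlonglongrightarrow> l" "\<And>k. \<bar>u k i j - l\<bar> \<le> d * r ^ k / (1 - r)"
      using geometric_increments_convergent[OF assms(1,2), of "\<lambda>k. u k i j" d] by auto
    then show ?thesis by (auto simp: mult.commute)
  qed
  then obtain L where "\<And>i j. (\<lambda>k. u k i j) \<longlonglongrightarrow> L i j"
    and "\<And>i j k. \<bar>u k i j - L i j\<bar> \<le> r ^ k / (1 - r) * d"
    by metis
  then show thesis
    by (intro that tendsto_fun_pointwise maxnorm_le)
qed

lemma maxnorm_contraction_iterates_increment: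
  fixes T :: "('a::finite \<Rightarrow> 'b::finite \<Rightarrow> real) \<Rightarrow> 'a \<Rightarrow> 'b \<Rightarrow> real"
  assumes "0 \<le> r"
    and contraction: "\<And>D D'. maxnorm (\<lambda>i j. T D i j - T D' i j) \<le> r * maxnorm (\<lambda>i j. D i j - D' i j)"
  shows "maxnorm (\<lambda>i j. (T ^^ Suc k) D\<^sub>0 i j - (T ^^ k) D\<^sub>0 i j)
         \<le> maxnorm (\<lambda>i j. T D\<^sub>0 i j - D\<^sub>0 i j) * r ^ k"
proof (induction k)
  case 0
  then show ?case by simp
next
  case (Suc k)
  have "maxnorm (\<lambda>i j. (T ^^ Suc (Suc k)) D\<^sub>0 i j - (T ^^ Suc k) D\<^sub>0 i j)
        \<le> r * maxnorm (\<lambda>i j. (T ^^ Suc k) D\<^sub>0 i j - (T ^^ k) D\<^sub>0 i j)"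
    unfolding funpow.simps(2) comp_apply by (rule contraction)
  also have "\<dots> \<le> r * (maxnorm (\<lambda>i j. T D\<^sub>0 i j - D\<^sub>0 i j) * r ^ k)"
    using Suc.IH \<open>0 \<le> r\<close> by (rule mult_left_mono)
  finally show ?case by (simp add: mult_ac)
qed

lemma maxnorm_contraction_limit_is_fixpoint:
  fixes T :: "('a::finite \<Rightarrow> 'b::finite \<Rightarrow> real) \<Rightarrow> 'a \<Rightarrow> 'b \<Rightarrow> real"
  assumes contraction: "\<And>D D'. maxnorm (\<lambda>i j. T D i j - T D' i j) \<le> r * maxnorm (\<lambda>i j. D i j - D' i j)"
    and lim: "(\<lambda>k. maxnorm (\<lambda>i j. (T ^^ k) D\<^sub>0 i j - L i j)) \<longlonglongrightarrow> 0"
  shows "T L = L"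
proof (rule maxnorm_diff_le_0_imp_eq)
  define e where "e k = maxnorm (\<lambda>i j. (T ^^ k) D\<^sub>0 i j - L i j)" for k
  have "maxnorm (\<lambda>i j. T L i j - L i j) \<le> r * e k + e (Suc k)" for k
  proof -
    have "maxnorm (\<lambda>i j. T L i j - L i j)
          \<le> maxnorm (\<lambda>i j. T L i j - T ((T ^^ k) D\<^sub>0) i j) + e (Suc k)"
      using maxnorm_triangle[of "T L" L "T ((T ^^ k) D\<^sub>0)"] by (simp add: e_def)
    also have "\<dots> \<le> r * e k + e (Suc k)"
      using contraction[of L "(T ^^ k) D\<^sub>0"] maxnorm_minus_commute[of L "(T ^^ k) D\<^sub>0"]
      by (simp add: e_def)
    finally show ?thesis .
  qed
  moreover have "(\<lambda>k. r * e k + e (Suc k)) \<longlonglongrightarrow> 0"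
    using lim unfolding e_def[symmetric] by (intro tendsto_add_zero tendsto_mult_right_zero LIMSEQ_Suc)
  ultimately show "maxnorm (\<lambda>i j. T L i j - L i j) \<le> 0"
    by (intro LIMSEQ_le_const[of "\<lambda>k. r * e k + e (Suc k)"]) auto
qed

lemma maxnorm_contraction_fixpoint:
  fixes T :: "('a::finite \<Rightarrow> 'b::finite \<Rightarrow> real) \<Rightarrow> 'a \<Rightarrow> 'b \<Rightarrow> real"
  assumes "0 \<le> r" "r < 1"
    and contraction: "\<And>D D'. maxnorm (\<lambda>i j. T D i j - T D' i j) \<le> r * maxnorm (\<lambda>i j. D i j - D' i j)"
  obtains L where "T L = L" and "(\<lambda>k. (T ^^ k) D\<^sub>0) \<longlonglongrightarrow> L"
    and "\<And>k. maxnorm (\<lambda>i j. (T ^^ k) D\<^sub>0 i j - L i j)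
               \<le> r ^ k / (1 - r) * maxnorm (\<lambda>i j. T D\<^sub>0 i j - D\<^sub>0 i j)"
proof -
  let ?d = "maxnorm (\<lambda>i j. T D\<^sub>0 i j - D\<^sub>0 i j)"
  obtain L where lim: "(\<lambda>k. (T ^^ k) D\<^sub>0) \<longlonglongrightarrow> L"
    and estimate: "\<And>k. maxnorm (\<lambda>i j. (T ^^ k) D\<^sub>0 i j - L i j) \<le> r ^ k / (1 - r) * ?d"
    using maxnorm_geometric_increments_convergent[OF assms(1,2), where u = "\<lambda>k. (T ^^ k) D\<^sub>0"]
      maxnorm_contraction_iterates_increment[OF assms(1) contraction] by blast
  have "(\<lambda>k. maxnorm (\<lambda>i j. (T ^^ k) D\<^sub>0 i j - L i j)) \<longlonglongrightarrow> 0"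
  proof (rule Lim_null_comparison)
    show "\<forall>\<^sub>F k in sequentially. norm (maxnorm (\<lambda>i j. (T ^^ k) D\<^sub>0 i j - L i j)) \<le> r ^ k / (1 - r) * ?d"
      using estimate by (intro always_eventually allI) (simp add: maxnorm_nonneg)
    show "(\<lambda>k. r ^ k / (1 - r) * ?d) \<longlonglongrightarrow> 0"
      using assms(1,2) by (intro tendsto_mult_left_zero tendsto_divide_zero LIMSEQ_power_zero) auto
  qed
  then have "T L = L"
    by (rule maxnorm_contraction_limit_is_fixpoint[OF contraction])
  then show thesis
    using lim estimate by (rule that)
qed

lemma sum_mult_ln_ge_neg_ln_card:
  assumes "finite S" "\<And>x. x \<in> S \<Longrightarrow> 0 \<le> p x" "sum p S = 1"
  shows "- ln (real (card S)) \<le> (\<Sum>x\<in>S. p x * ln (p x))"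
proof -
  define N where "N = real (card S)"
  have "S \<noteq> {}" using assms(3) by auto
  then have "0 < N" using assms(1) by (simp add: N_def card_gt_0_iff)
  have pointwise: "- p x * ln N + p x - 1 / N \<le> p x * ln (p x)" if "x \<in> S" for x
  proof (cases "p x = 0")
    case True
    with \<open>0 < N\<close> show ?thesis by simp
  next
    case False
    with assms(2)[OF that] have "0 < p x" by simp
    have "ln (1 / (p x * N)) \<le> 1 / (p x * N) - 1"
      using \<open>0 < p x\<close> \<open>0 < N\<close> by (intro ln_le_minus_one) simp
    then have "1 - 1 / (p x * N) \<le> ln (p x) + ln N"
      using \<open>0 < p x\<close> \<open>0 < N\<close> by (simp add: ln_div ln_mult)
    then have "p x * (1 - 1 / (p x * N)) \<le> p x * (ln (p x) + ln N)"
      using \<open>0 < p x\<close> by (intro mult_left_mono) auto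
    moreover have "p x * (1 - 1 / (p x * N)) = p x - 1 / N"
      using \<open>0 < p x\<close> \<open>0 < N\<close> by (simp add: field_simps)
    ultimately show ?thesis
      by (simp add: algebra_simps)
  qed
  have "- ln N = (\<Sum>x\<in>S. - p x * ln N + p x - 1 / N)"
    using assms(3) \<open>0 < N\<close> by (simp add: sum.distrib sum_subtractf N_def flip: sum_distrib_right)
  also have "\<dots> \<le> (\<Sum>x\<in>S. p x * ln (p x))"
    using pointwise by (rule sum_mono)
  finally show ?thesis
    unfolding N_def .
qed

lemma is_prob_le_1: "is_prob \<alpha> \<Longrightarrow> \<alpha> i \<le> 1"
  unfolding is_prob_def using member_le_sum[of i UNIV \<alpha>] by auto

lemma coupling_nonneg: "P \<in> couplings \<alpha> \<beta> \<Longrightarrow> 0 \<le> P i j"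
  unfolding couplings_def by auto

lemma coupling_total_mass:
  assumes "P \<in> couplings \<alpha> \<beta>" "is_prob \<alpha>"
  shows "(\<Sum>i\<in>UNIV. \<Sum>j\<in>UNIV. P i j) = 1"
  using assms unfolding couplings_def is_prob_def by simp

lemma product_coupling:
  assumes "is_prob \<alpha>" "is_prob \<beta>"
  shows "(\<lambda>i j. \<alpha> i * \<beta> j) \<in> couplings \<alpha> \<beta>"
  using assms unfolding couplings_def is_prob_def
  by (simp flip: sum_distrib_left sum_distrib_right)

lemma abs_sum_coupling_le_maxnorm:
  assumes "P \<in> couplings \<alpha> \<beta>" "is_prob \<alpha>"
  shows "\<bar>\<Sum>i\<in>UNIV. \<Sum>j\<in>UNIV. P i j * A i j\<bar> \<le> maxnorm A"
proof -
  have "\<bar>\<Sum>i\<in>UNIV. \<Sum>j\<in>UNIV. P i j * A i j\<bar> \<le> (\<Sum>i\<in>UNIV. \<Sum>j\<in>UNIV. \<bar>P i j * A i j\<bar>)"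
    by (rule order_trans[OF sum_abs sum_mono[OF sum_abs]])
  also have "\<dots> \<le> (\<Sum>i\<in>UNIV. \<Sum>j\<in>UNIV. P i j * maxnorm A)"
    using coupling_nonneg[OF assms(1)]
    by (intro sum_mono) (simp add: abs_mult abs_le_maxnorm mult_left_mono)
  also have "\<dots> = maxnorm A"
    using coupling_total_mass[OF assms] by (simp flip: sum_distrib_right)
  finally show ?thesis .
qed

lemma coupling_sum_mult_ln_ge:
  fixes P :: "'x::finite \<Rightarrow> 'y::finite \<Rightarrow> real"
  assumes "P \<in> couplings \<alpha> \<beta>" "is_prob \<alpha>"
  shows "- ln (real (CARD('x) * CARD('y))) \<le> (\<Sum>i\<in>UNIV. \<Sum>j\<in>UNIV. P i j * ln (P i j))"
proof -
  have pairs: "(\<Sum>i\<in>UNIV. \<Sum>j\<in>UNIV. f i j) = (\<Sum>x\<in>UNIV. case_prod f x)" for f :: "'x \<Rightarrow> 'y \<Rightarrow> real"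
    by (simp add: sum.cartesian_product)
  have "(\<Sum>x\<in>UNIV. case_prod P x) = 1"
    using coupling_total_mass[OF assms] by (simp add: pairs)
  then have "- ln (real (card (UNIV :: ('x \<times> 'y) set))) \<le> (\<Sum>x\<in>UNIV. case_prod P x * ln (case_prod P x))"
    using coupling_nonneg[OF assms(1)] by (intro sum_mult_ln_ge_neg_ln_card) auto
  then show ?thesis
    by (simp add: pairs[of "\<lambda>i j. P i j * ln (P i j)"] case_prod_beta' flip: UNIV_Times_UNIV)
qed

lemma ot_objective_ge:
  fixes P :: "'x::finite \<Rightarrow> 'y::finite \<Rightarrow> real"
  assumes "P \<in> couplings \<alpha> \<beta>" "is_prob \<alpha>" "0 \<le> \<epsilon>"
  shows "- maxnorm D - \<epsilon> * ln (real (CARD('x) * CARD('y))) \<le> ot_objective \<epsilon> D P"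
proof -
  have "\<epsilon> * - ln (real (CARD('x) * CARD('y))) \<le> \<epsilon> * (\<Sum>i\<in>UNIV. \<Sum>j\<in>UNIV. P i j * ln (P i j))"
    using coupling_sum_mult_ln_ge[OF assms(1,2)] assms(3) by (rule mult_left_mono)
  then show ?thesis
    using abs_sum_coupling_le_maxnorm[OF assms(1,2), of D] unfolding ot_objective_def by linarith
qed

lemma ot_objective_product_coupling_le:
  assumes "is_prob \<alpha>" "is_prob \<beta>" "0 \<le> \<epsilon>"
  shows "ot_objective \<epsilon> D (\<lambda>i j. \<alpha> i * \<beta> j) \<le> maxnorm D"
proof -
  let ?P = "\<lambda>i j. \<alpha> i * \<beta> j"
  have P_bounds: "0 \<le> ?P i j" "?P i j \<le> 1" for i j
    using assms(1,2) is_prob_le_1[OF assms(1), of i] is_prob_le_1[OF assms(2), of j]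
    unfolding is_prob_def by (auto intro: mult_le_one)
  have "x * ln x \<le> 0" if "0 \<le> x" "x \<le> 1" for x :: real
    using that by (cases "x = 0") (auto intro!: mult_nonneg_nonpos)
  then have "?P i j * ln (?P i j) \<le> 0" for i j
    using P_bounds by blast
  then have "\<epsilon> * (\<Sum>i\<in>UNIV. \<Sum>j\<in>UNIV. ?P i j * ln (?P i j)) \<le> 0"
    using assms(3) by (simp add: mult_nonneg_nonpos sum_nonpos)
  then show ?thesis
    using abs_sum_coupling_le_maxnorm[OF product_coupling[OF assms(1,2)] assms(1), of D]
    unfolding ot_objective_def by linarith
qed

lemma dW_le_ot_objective:
  assumes "is_prob \<alpha>" "0 \<le> \<epsilon>" "P \<in> couplings \<alpha> \<beta>"
  shows "dW \<epsilon> \<alpha> \<beta> D \<le> ot_objective \<epsilon> D P"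
proof -
  have "bdd_below (ot_objective \<epsilon> D ` couplings \<alpha> \<beta>)"
    using ot_objective_ge[OF _ assms(1,2)] unfolding bdd_below_def by blast
  then show ?thesis
    unfolding dW_def using assms(3) by (rule cINF_lower)
qed

lemma dW_ge:
  assumes "is_prob \<alpha>" "is_prob \<beta>" "\<And>P. P \<in> couplings \<alpha> \<beta> \<Longrightarrow> b \<le> ot_objective \<epsilon> D P"
  shows "b \<le> dW \<epsilon> \<alpha> \<beta> D"
  unfolding dW_def using product_coupling[OF assms(1,2)] assms(3) by (intro cINF_greatest) auto

lemma abs_dW_le:
  fixes \<alpha> :: "'x::finite \<Rightarrow> real" and \<beta> :: "'y::finite \<Rightarrow> real"
  assumes "is_prob \<alpha>" "is_prob \<beta>" "0 \<le> \<epsilon>"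
  shows "\<bar>dW \<epsilon> \<alpha> \<beta> D\<bar> \<le> maxnorm D + \<epsilon> * ln (real (CARD('x) * CARD('y)))"
proof -
  have "1 \<le> CARD('x) * CARD('y)"
    by (simp add: Suc_le_eq)
  then have "0 \<le> \<epsilon> * ln (real (CARD('x) * CARD('y)))"
    using assms(3) by (metis ln_ge_zero mult_nonneg_nonneg of_nat_1 of_nat_le_iff)
  moreover have "dW \<epsilon> \<alpha> \<beta> D \<le> maxnorm D"
    using dW_le_ot_objective[OF assms(1,3) product_coupling[OF assms(1,2)]]
      ot_objective_product_coupling_le[OF assms] by (rule order_trans)
  moreover have "- maxnorm D - \<epsilon> * ln (real (CARD('x) * CARD('y))) \<le> dW \<epsilon> \<alpha> \<beta> D"
    using ot_objective_ge[OF _ assms(1,3)] by (intro dW_ge[OF assms(1,2)])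
  ultimately show ?thesis
    unfolding abs_le_iff by linarith
qed

lemma dW_lipschitz:
  assumes "is_prob \<alpha>" "is_prob \<beta>" "0 \<le> \<epsilon>"
  shows "\<bar>dW \<epsilon> \<alpha> \<beta> D - dW \<epsilon> \<alpha> \<beta> D'\<bar> \<le> maxnorm (\<lambda>i j. D i j - D' i j)"
proof -
  have "dW \<epsilon> \<alpha> \<beta> D - maxnorm (\<lambda>i j. D i j - D' i j) \<le> dW \<epsilon> \<alpha> \<beta> D'" for D D'
  proof (rule dW_ge[OF assms(1,2)])
    fix P assume P: "P \<in> couplings \<alpha> \<beta>"
    have "ot_objective \<epsilon> D P = ot_objective \<epsilon> D' P + (\<Sum>i\<in>UNIV. \<Sum>j\<in>UNIV. P i j * (D i j - D' i j))"
      unfolding ot_objective_def by (simp add: algebra_simps sum.distrib sum_subtractf)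
    then show "dW \<epsilon> \<alpha> \<beta> D - maxnorm (\<lambda>i j. D i j - D' i j) \<le> ot_objective \<epsilon> D' P"
      using dW_le_ot_objective[OF assms(1,3) P, of D]
        abs_sum_coupling_le_maxnorm[OF P assms(1), of "\<lambda>i j. D i j - D' i j"] by linarith
  qed
  from this[of D D'] this[of D' D] show ?thesis
    by (simp add: abs_le_iff maxnorm_minus_commute[of D'])
qed

lemma wl_update_contraction:
  assumes "\<And>i. is_prob (mX i)" "\<And>j. is_prob (mY j)" "0 \<le> \<epsilon>" "\<delta> \<le> 1"
  shows "maxnorm (\<lambda>i j. wl_update \<epsilon> \<delta> mX mY C D i j - wl_update \<epsilon> \<delta> mX mY C D' i j)
         \<le> (1 - \<delta>) * maxnorm (\<lambda>i j. D i j - D' i j)"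
proof (rule maxnorm_le)
  fix i j
  have "\<bar>wl_update \<epsilon> \<delta> mX mY C D i j - wl_update \<epsilon> \<delta> mX mY C D' i j\<bar>
        = (1 - \<delta>) * \<bar>dW \<epsilon> (mX i) (mY j) D - dW \<epsilon> (mX i) (mY j) D'\<bar>"
    using assms(4) by (simp add: wl_update_def abs_mult flip: right_diff_distrib)
  also have "\<dots> \<le> (1 - \<delta>) * maxnorm (\<lambda>i j. D i j - D' i j)"
    using dW_lipschitz[OF assms(1,2,3)] assms(4) by (intro mult_left_mono) auto
  finally show "\<bar>wl_update \<epsilon> \<delta> mX mY C D i j - wl_update \<epsilon> \<delta> mX mY C D' i j\<bar>
                \<le> (1 - \<delta>) * maxnorm (\<lambda>i j. D i j - D' i j)" .
qed

lemma wl_update_displacement: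
  fixes mX :: "'x::finite \<Rightarrow> 'x \<Rightarrow> real" and mY :: "'y::finite \<Rightarrow> 'y \<Rightarrow> real"
  assumes "\<And>i. is_prob (mX i)" "\<And>j. is_prob (mY j)" "0 \<le> \<epsilon>" "0 \<le> \<delta>" "\<delta> \<le> 1"
  shows "maxnorm (\<lambda>i j. wl_update \<epsilon> \<delta> mX mY C C i j - C i j)
         \<le> 2 * maxnorm C + \<epsilon> * ln (real (CARD('x) * CARD('y)))"
proof (rule maxnorm_le)
  fix i j
  have "wl_update \<epsilon> \<delta> mX mY C C i j - C i j = (1 - \<delta>) * (dW \<epsilon> (mX i) (mY j) C - C i j)"
    by (simp add: wl_update_def algebra_simps)
  then have "\<bar>wl_update \<epsilon> \<delta> mX mY C C i j - C i j\<bar> = (1 - \<delta>) * \<bar>dW \<epsilon> (mX i) (mY j) C - C i j\<bar>"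
    using assms(5) by (simp add: abs_mult)
  also have "\<dots> \<le> \<bar>dW \<epsilon> (mX i) (mY j) C - C i j\<bar>"
    using assms(4,5) by (intro mult_left_le_one_le) auto
  also have "\<dots> \<le> 2 * maxnorm C + \<epsilon> * ln (real (CARD('x) * CARD('y)))"
    using abs_dW_le[OF assms(1,2,3), of i j C] abs_le_maxnorm[of C i j]
      abs_triangle_ineq4[of "dW \<epsilon> (mX i) (mY j) C" "C i j"] by linarith
  finally show "\<bar>wl_update \<epsilon> \<delta> mX mY C C i j - C i j\<bar>
                \<le> 2 * maxnorm C + \<epsilon> * ln (real (CARD('x) * CARD('y)))" .
qed

theorem proposition37:
  fixes mX :: "'x::finite \<Rightarrow> 'x \<Rightarrow> real" and mY :: "'y::finite \<Rightarrow> 'y \<Rightarrow> real"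
    and C :: "'x \<Rightarrow> 'y \<Rightarrow> real" and \<delta> \<epsilon> :: real
  assumes "\<And>i. is_prob (mX i)" and "\<And>j. is_prob (mY j)"
    and "\<And>i j. C i j \<ge> 0"
    and "0 < \<delta>" and "\<delta> \<le> 1" and "\<epsilon> \<ge> 0"
  shows "\<exists>Cinf. wl_update \<epsilon> \<delta> mX mY C Cinf = Cinf
           \<and> (\<forall>D. wl_update \<epsilon> \<delta> mX mY C D = D \<longrightarrow> D = Cinf)
           \<and> (\<lambda>k. (wl_update \<epsilon> \<delta> mX mY C ^^ k) C) \<longlonglongrightarrow> Cinf
           \<and> (\<forall>k. maxnorm (\<lambda>i j. (wl_update \<epsilon> \<delta> mX mY C ^^ k) C i j - Cinf i j)
                 \<le> (1 - \<delta>) ^ k / \<delta> * (2 * maxnorm C + \<epsilon> * ln (real (CARD('x) * CARD('y)))))"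
proof -
  let ?T = "wl_update \<epsilon> \<delta> mX mY C"
  let ?B = "2 * maxnorm C + \<epsilon> * ln (real (CARD('x) * CARD('y)))"
  have contraction: "maxnorm (\<lambda>i j. ?T D i j - ?T D' i j) \<le> (1 - \<delta>) * maxnorm (\<lambda>i j. D i j - D' i j)"
    for D D'
    using assms(1,2,6,5) by (rule wl_update_contraction)
  obtain L where fixpoint: "?T L = L" and limit: "(\<lambda>k. (?T ^^ k) C) \<longlonglongrightarrow> L"
    and estimate: "\<And>k. maxnorm (\<lambda>i j. (?T ^^ k) C i j - L i j)
                     \<le> (1 - \<delta>) ^ k / \<delta> * maxnorm (\<lambda>i j. ?T C i j - C i j)"
    using maxnorm_contraction_fixpoint[of "1 - \<delta>" ?T] contraction assms(4,5) by auto
  have "maxnorm (\<lambda>i j. (?T ^^ k) C i j - L i j) \<le> (1 - \<delta>) ^ k / \<delta> * ?B" for k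
  proof -
    have "maxnorm (\<lambda>i j. ?T C i j - C i j) \<le> ?B"
      using assms(1,2,6) assms(4,5) by (intro wl_update_displacement) auto
    then show ?thesis
      using assms(4,5) by (intro order_trans[OF estimate mult_left_mono]) auto
  qed
  moreover have "D = L" if "?T D = D" for D
    using maxnorm_contraction_fixpoint_unique[of "1 - \<delta>" ?T] contraction assms(4) that fixpoint
    by auto
  ultimately show ?thesis
    using fixpoint limit by blast
qed

end
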